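(* For any finite set $P$ of prime numbers, there is a generalized Euclid sequence with seed $P$ that contains every prime number.
   Context: Given a finite set $\{p_1,\ldots,p_k\}$ of distinct primes, for any $I\subseteq\{1,\ldots,k\}$ put $N_I=\prod_{i\in I}p_i+\prod_{i\in\{1,\ldots,k\}\setminus I}p_i$ (empty products equal $1$); $N_I>1$ is coprime to $p_1\cdots p_k$. A generalized Euclid sequence with seed $\{p_1,\ldots,p_k\}$ is an infinite sequence of primes $p_1,p_2,\ldots$ beginning with the seed primes (in some order) such that for every $j\ge k$, $p_{j+1}$ is a prime factor of $N_I$ for some $I\subseteq\{1,\ldots,j\}$ (formed with $p_1,\ldots,p_j$ in place of $p_1,\ldots,p_k$). Equivalently, $p_{j+1}$ is a prime divisor of $d+n/d$ for some positive divisor $d$ of $n=p_1\cdots p_j$. *)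

theory Defs
  imports "HOL-Computational_Algebra.Primes"
begin

(* The sequence p_1, p_2, ... of the paper is rendered 0-indexed: p 0, p 1, ... *)
definition gen_euclid_seq :: "nat set \<Rightarrow> (nat \<Rightarrow> nat) \<Rightarrow> bool" where
  "gen_euclid_seq P p \<longleftrightarrow>
     (\<forall>i. prime (p i)) \<and>
     bij_betw p {..<card P} P \<and>
     (\<forall>j\<ge>card P. \<exists>I\<subseteq>{..<j}.
         p j dvd (\<Prod>i\<in>I. p i) + (\<Prod>i\<in>{..<j} - I. p i))"

end

theory Submission
  imports Defs "HOL-Number_Theory.Residues"
begin

(*
  Suppose a prime q could never be reached from some finite set of primes. Among all such
  blocked sets take one, A, whose subset products cover the most residues mod q, and call Y this
  set of residues. If a blocked set B has the same residue set Y (a twin) and r is a prime divisor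
  of some N_I formed from B, then adjoining r to B gives a twin again, so r mod q stabilises Y.
  Let K be the subgroup of (Z/q)^* generated by the stabilising x for which c0 * x, c0 = prod A,
  is the product of a twin. For a twin B with product c0 * x, x in K, every divisor of every N_I
  of B lies in K mod q; taking I with prod I = k^-1 (mod q) shows 1 + c k^2 in K for all k in K,
  where c = prod B. Summing (1 + c k^2)^|K| over K then forces |K| = 2m and
  q | c^m + binom(2m, m). Comparing this for B and for A gives x^m = 1 for all generators x, so
  K has exponent m < |K|, which is absurd. The sequence is then built by extending the seed step
  by step, the n-th step reaching n whenever n is prime.
*)

(* Residues mod q are represented by their least non-negative representatives. *)
definition unit_subgroup :: "nat \<Rightarrow> nat set \<Rightarrow> bool" where
  "unit_subgroup q K \<longleftrightarrow> K \<subseteq> {1..<q} \<and> 1 \<in> K \<and> (\<forall>a\<in>K. \<forall>b\<in>K. a * b mod q \<in> K)"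

lemma prime_coprime_of_not_dvd: "prime (q::nat) \<Longrightarrow> \<not> q dvd k \<Longrightarrow> coprime k q"
  by (metis coprime_commute prime_imp_coprime)

lemma dvd_double_le_iff:
  fixes N i :: nat
  assumes "0 < N" and "i \<le> N"
  shows "N dvd 2 * i \<longleftrightarrow> i = 0 \<or> i = N \<or> 2 * i = N"
proof
  assume "N dvd 2 * i"
  then obtain t where t: "2 * i = N * t" by blast
  then have "N * t \<le> N * 2" using assms(2) by linarith
  then have "t \<le> 2" using assms(1) by simp
  then have "t = 0 \<or> t = 1 \<or> t = 2" by auto
  then show "i = 0 \<or> i = N \<or> 2 * i = N" using t by auto
qed auto

lemma sum_binomial_affine_squares:
  fixes c :: nat and K :: "nat set"
  shows "(\<Sum>k\<in>K. (1 + c * k\<^sup>2) ^ N) = (\<Sum>i\<le>N. (N choose i) * c ^ i * (\<Sum>k\<in>K. k ^ (2 * i)))"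
proof -
  have "(1 + c * k\<^sup>2) ^ N = (\<Sum>i\<le>N. (N choose i) * c ^ i * k ^ (2 * i))" for k
    using binomial_ring[of "c * k\<^sup>2" 1 N]
    by (simp add: add.commute power_mult_distrib power_mult mult.assoc)
  then have "(\<Sum>k\<in>K. (1 + c * k\<^sup>2) ^ N) = (\<Sum>i\<le>N. \<Sum>k\<in>K. (N choose i) * c ^ i * k ^ (2 * i))"
    using sum.swap by simp
  then show ?thesis by (simp add: sum_distrib_left)
qed

context
  fixes q :: nat and K :: "nat set"
  assumes prime_q: "prime q" and K: "unit_subgroup q K"
begin

lemma unit_subgroup_finite: "finite K"
  using K finite_subset by (auto simp: unit_subgroup_def)

lemma unit_subgroup_coprime:
  assumes "k \<in> K"
  shows "coprime k q"
proof -
  have "0 < k" "k < q" using K assms by (auto simp: unit_subgroup_def)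
  then show ?thesis using prime_q by (intro prime_coprime_of_not_dvd) (auto dest: dvd_imp_le)
qed

lemma unit_subgroup_mult_bij:
  assumes g: "g \<in> K"
  shows "bij_betw (\<lambda>k. g * k mod q) K K"
proof -
  have inj: "inj_on (\<lambda>k. g * k mod q) K"
  proof
    fix a b assume a: "a \<in> K" and b: "b \<in> K" and "g * a mod q = g * b mod q"
    then have "[a * g = b * g] (mod q)" by (simp add: cong_def mult.commute)
    then have "[a = b] (mod q)" using unit_subgroup_coprime[OF g] cong_mult_rcancel_nat by blast
    moreover have "a < q" "b < q" using a b K by (auto simp: unit_subgroup_def)
    ultimately show "a = b" by (simp add: cong_def)
  qed
  moreover have "(\<lambda>k. g * k mod q) ` K \<subseteq> K" using K g by (auto simp: unit_subgroup_def)
  ultimately show ?thesis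
    using card_subset_eq[OF unit_subgroup_finite] card_image by (metis bij_betw_def)
qed

lemma unit_subgroup_pow_card:
  assumes y: "y \<in> K"
  shows "[y ^ card K = 1] (mod q)"
proof -
  have "[y ^ card K * (\<Prod>k\<in>K. k) = (\<Prod>k\<in>K. y * k)] (mod q)"
    by (simp add: prod.distrib)
  also have "[(\<Prod>k\<in>K. y * k) = (\<Prod>k\<in>K. y * k mod q)] (mod q)"
    by (rule cong_prod) (simp add: cong_def)
  also have "(\<Prod>k\<in>K. y * k mod q) = 1 * (\<Prod>k\<in>K. k)"
    using prod.reindex_bij_betw[OF unit_subgroup_mult_bij[OF y], of "\<lambda>k. k"] by simp
  finally show ?thesis
    using cong_mult_rcancel_nat prod_coprime_left unit_subgroup_coprime by metis
qed

lemma unit_subgroup_power_sum_dvd: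
  assumes g: "g \<in> K" and nontrivial: "\<not> [g ^ e = 1] (mod q)"
  shows "q dvd (\<Sum>k\<in>K. k ^ e)"
proof (rule ccontr)
  assume "\<not> q dvd (\<Sum>k\<in>K. k ^ e)"
  then have cop: "coprime (\<Sum>k\<in>K. k ^ e) q" using prime_q prime_coprime_of_not_dvd by blast
  have "[g ^ e * (\<Sum>k\<in>K. k ^ e) = (\<Sum>k\<in>K. (g * k) ^ e)] (mod q)"
    by (simp add: power_mult_distrib sum_distrib_left)
  also have "[(\<Sum>k\<in>K. (g * k) ^ e) = (\<Sum>k\<in>K. (g * k mod q) ^ e)] (mod q)"
    by (rule cong_sum) (simp add: cong_def power_mod)
  also have "(\<Sum>k\<in>K. (g * k mod q) ^ e) = 1 * (\<Sum>k\<in>K. k ^ e)"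
    using sum.reindex_bij_betw[OF unit_subgroup_mult_bij[OF g], of "\<lambda>k. k ^ e"] by simp
  finally show False using cong_mult_rcancel_nat[OF cop] nontrivial by blast
qed

lemma unit_subgroup_card_le_exponent:
  assumes "e > 0" and "\<forall>k\<in>K. [k ^ e = 1] (mod q)"
  shows "card K \<le> e"
proof -
  have "card K \<le> card {x\<in>{..<q}. [x ^ e = 1] (mod q)}"
    using K assms by (intro card_mono) (auto simp: unit_subgroup_def)
  also have "\<dots> \<le> e" using roots_mod_prime_bound[OF prime_q \<open>e > 0\<close>] by simp
  finally show ?thesis .
qed

lemma unit_subgroup_card_pos: "card K > 0"
  using K unit_subgroup_finite by (auto simp: unit_subgroup_def card_gt_0_iff)

lemma unit_subgroup_coprime_card: "coprime (card K) q"
proof -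
  have "K \<subseteq> {1..<q}" using K by (simp add: unit_subgroup_def)
  then have "card K < q" using card_mono[of "{1..<q}" K] prime_gt_1_nat[OF prime_q] by simp
  then show ?thesis
    using unit_subgroup_card_pos prime_q by (intro prime_coprime_of_not_dvd) (auto dest: dvd_imp_le)
qed

lemma unit_subgroup_pow_mod_card:
  assumes k: "k \<in> K"
  shows "[k ^ n = k ^ (n mod card K)] (mod q)"
proof -
  have "k ^ n = k ^ (card K * (n div card K) + n mod card K)" by simp
  also have "\<dots> = (k ^ card K) ^ (n div card K) * k ^ (n mod card K)"
    by (simp only: power_add power_mult)
  also have "[\<dots> = 1 ^ (n div card K) * k ^ (n mod card K)] (mod q)"
    using unit_subgroup_pow_card[OF k] by (intro cong_mult cong_pow) auto
  finally show ?thesis by simp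
qed

lemma unit_subgroup_exponent_iff: "(\<forall>k\<in>K. [k ^ e = 1] (mod q)) \<longleftrightarrow> card K dvd e"
proof
  assume one: "\<forall>k\<in>K. [k ^ e = 1] (mod q)"
  show "card K dvd e"
  proof (rule ccontr)
    assume "\<not> card K dvd e"
    then have pos: "e mod card K > 0" by (simp add: mod_greater_zero_iff_not_dvd)
    have "\<forall>k\<in>K. [k ^ (e mod card K) = 1] (mod q)"
      using one unit_subgroup_pow_mod_card cong_sym cong_trans by meson
    then have "card K \<le> e mod card K" using unit_subgroup_card_le_exponent[OF pos] by blast
    then show False using unit_subgroup_card_pos mod_less_divisor[of "card K" e] by linarith
  qed
next
  assume "card K dvd e"
  then show "\<forall>k\<in>K. [k ^ e = 1] (mod q)"
    using unit_subgroup_pow_mod_card[of _ e] by (simp add: dvd_imp_mod_0)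
qed

lemma unit_subgroup_power_sum:
  "[(\<Sum>k\<in>K. k ^ e) = (if card K dvd e then card K else 0)] (mod q)"
proof (cases "card K dvd e")
  case True
  then have "[(\<Sum>k\<in>K. k ^ e) = (\<Sum>k\<in>K. 1)] (mod q)"
    using unit_subgroup_exponent_iff by (intro cong_sum) auto
  then show ?thesis using True by simp
next
  case False
  then obtain g where "g \<in> K" "\<not> [g ^ e = 1] (mod q)" using unit_subgroup_exponent_iff by blast
  then show ?thesis using False unit_subgroup_power_sum_dvd by (simp add: cong_0_iff)
qed

lemma unit_subgroup_affine_squares_sum:
  assumes closed: "\<forall>k\<in>K. (1 + c * k\<^sup>2) mod q \<in> K"
  shows "[(\<Sum>i\<in>{i\<in>{..card K}. card K dvd 2 * i}. (card K choose i) * c ^ i) = 1] (mod q)"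
proof -
  define N where "N = card K"
  define R where "R = (\<Sum>i\<in>{i\<in>{..N}. N dvd 2 * i}. (N choose i) * c ^ i)"
  \<comment> \<open>Count \<open>\<Sum>k\<in>K. (1 + c k\<^sup>2)\<^sup>N\<close> twice: termwise by Lagrange, and by the binomial theorem
     followed by the power sums, of which only those with \<open>N dvd 2 i\<close> survive.\<close>
  have "[N * 1 = (\<Sum>k\<in>K. 1)] (mod q)" using N_def by simp
  also have "[(\<Sum>k\<in>K. 1) = (\<Sum>k\<in>K. (1 + c * k\<^sup>2) ^ N)] (mod q)"
  proof (rule cong_sum)
    fix k assume "k \<in> K"
    then have "[((1 + c * k\<^sup>2) mod q) ^ N = 1] (mod q)"
      using closed unit_subgroup_pow_card N_def by blast
    then show "[1 = (1 + c * k\<^sup>2) ^ N] (mod q)" by (simp add: cong_def power_mod)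
  qed
  also have "(\<Sum>k\<in>K. (1 + c * k\<^sup>2) ^ N) = (\<Sum>i\<le>N. (N choose i) * c ^ i * (\<Sum>k\<in>K. k ^ (2 * i)))"
    by (rule sum_binomial_affine_squares)
  also have "[\<dots> = (\<Sum>i\<le>N. (N choose i) * c ^ i * (if N dvd 2 * i then N else 0))] (mod q)"
    unfolding N_def by (intro cong_sum cong_mult cong_refl unit_subgroup_power_sum)
  also have "(\<Sum>i\<le>N. (N choose i) * c ^ i * (if N dvd 2 * i then N else 0)) = N * R"
    unfolding R_def sum_distrib_left sum.inter_filter[OF finite_atMost]
    by (intro sum.cong) auto
  finally have "[N * R = N * 1] (mod q)" by (rule cong_sym)
  then show ?thesis
    using unit_subgroup_coprime_card cong_mult_lcancel_nat unfolding R_def N_def by blast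
qed

lemma unit_subgroup_affine_squares:
  assumes c: "\<not> q dvd c" and closed: "\<forall>k\<in>K. (1 + c * k\<^sup>2) mod q \<in> K"
  shows "even (card K) \<and> q dvd c ^ (card K div 2) + (card K choose (card K div 2))"
proof -
  define N where "N = card K"
  define S where "S = {i\<in>{..N}. N dvd 2 * i}"
  have N_pos: "N > 0" using unit_subgroup_card_pos N_def by simp
  have R_one: "[(\<Sum>i\<in>S. (N choose i) * c ^ i) = 1] (mod q)"
    using unit_subgroup_affine_squares_sum[OF closed] unfolding S_def N_def .
  have S_char: "i \<in> S \<longleftrightarrow> i = 0 \<or> i = N \<or> 2 * i = N" for i
    unfolding S_def using dvd_double_le_iff[OF N_pos] by auto
  have c_pow: "\<not> q dvd c ^ n" for n using c prime_q prime_dvd_power by blast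
  show ?thesis
  proof (cases "even N")
    case False
    then have "S = {0, N}" using S_char by auto
    then have "[1 + c ^ N = 1 + 0] (mod q)" using R_one N_pos by simp
    then have "[c ^ N = 0] (mod q)" by (simp only: cong_add_lcancel_nat)
    then show ?thesis using c_pow by (simp add: cong_0_iff)
  next
    case True
    then obtain m where m: "N = 2 * m" by blast
    then have "S = {0, m, N}" using S_char by auto
    moreover have "c ^ N = c ^ m * c ^ m" using m by (simp add: mult_2 power_add)
    ultimately have "[1 + c ^ m * (c ^ m + (N choose m)) = 1 + 0] (mod q)"
      using R_one N_pos m by (simp add: algebra_simps)
    then have "[c ^ m * (c ^ m + (N choose m)) = 0] (mod q)" by (simp only: cong_add_lcancel_nat)
    then have "q dvd c ^ m * (c ^ m + (N choose m))" by (simp add: cong_0_iff)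
    then have "q dvd c ^ m + (N choose m)" using c_pow prime_q prime_dvd_mult_iff by blast
    then show ?thesis using True m N_def by simp
  qed
qed

lemma unit_subgroup_pow_mod: "k \<in> K \<Longrightarrow> k ^ n mod q \<in> K"
proof (induction n)
  case 0
  then show ?case using K prime_gt_1_nat[OF prime_q] by (simp add: unit_subgroup_def)
next
  case (Suc n)
  then have "k * (k ^ n mod q) mod q \<in> K" using K by (simp add: unit_subgroup_def)
  then show ?case by (simp add: mod_mult_right_eq)
qed

lemma unit_subgroup_inverse:
  assumes "k \<in> K"
  obtains k' where "k' \<in> K" and "[k' * k = 1] (mod q)"
proof
  show "k ^ (card K - 1) mod q \<in> K" using unit_subgroup_pow_mod[OF assms] .
  have "k ^ (card K - 1) * k = k ^ card K"
    using unit_subgroup_card_pos by (metis Suc_diff_1 power_Suc2)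
  then show "[k ^ (card K - 1) mod q * k = 1] (mod q)"
    using unit_subgroup_pow_card[OF assms] by (simp add: cong_def mod_mult_left_eq)
qed

lemma unit_subgroup_mod_of_prime_divisors:
  assumes "u > 0" and "\<And>r. prime r \<Longrightarrow> r dvd u \<Longrightarrow> r mod q \<in> K"
  shows "u mod q \<in> K"
  using assms
proof (induction u rule: less_induct)
  case (less u)
  show ?case
  proof (cases "u = 1")
    case True
    then show ?thesis using K prime_gt_1_nat[OF prime_q] by (simp add: unit_subgroup_def)
  next
    case False
    then obtain r where r: "prime r" "r dvd u" using prime_factor_nat by blast
    then obtain w where u: "u = r * w" by blast
    then have "w < u" "w > 0" using less.prems(1) prime_gt_1_nat[OF r(1)] by auto
    then have "w mod q \<in> K" using less u by auto
    then have "(r mod q) * (w mod q) mod q \<in> K" using K less.prems(2) r by (simp add: unit_subgroup_def)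
    then show ?thesis using u by (simp add: mod_mult_eq)
  qed
qed

end

definition euclid_divisor :: "nat set \<Rightarrow> nat \<Rightarrow> bool" where
  "euclid_divisor A r \<longleftrightarrow> (\<exists>T\<subseteq>A. r dvd (\<Prod>x\<in>T. x) + (\<Prod>x\<in>A - T. x))"

fun euclid_extension :: "nat set \<Rightarrow> nat list \<Rightarrow> bool" where
  "euclid_extension A [] = True"
| "euclid_extension A (x # xs) \<longleftrightarrow>
     prime x \<and> euclid_divisor A x \<and> euclid_extension (insert x A) xs"

definition euclid_reachable :: "nat set \<Rightarrow> nat \<Rightarrow> bool" where
  "euclid_reachable A q \<longleftrightarrow> (\<exists>xs. euclid_extension A xs \<and> q \<in> set xs)"

lemma prime_dvd_prod_primes_iff:
  assumes "finite T" and "\<forall>p\<in>T. prime p" and "prime (r::nat)"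
  shows "r dvd (\<Prod>x\<in>T. x) \<longleftrightarrow> r \<in> T"
  using assms by (auto simp: prime_dvd_prod_iff dest: primes_dvd_imp_eq) (use dvd_refl in blast)

lemma euclid_divisor_not_mem:
  assumes "finite A" and "\<forall>p\<in>A. prime p" and "prime r" and "euclid_divisor A r"
  shows "r \<notin> A"
proof
  assume "r \<in> A"
  obtain T where T: "T \<subseteq> A" and r_dvd: "r dvd (\<Prod>x\<in>T. x) + (\<Prod>x\<in>A - T. x)"
    using assms(4) by (auto simp: euclid_divisor_def)
  have "finite T" using T assms(1) finite_subset by blast
  then have "r dvd (\<Prod>x\<in>T. x) \<longleftrightarrow> r \<in> T" and "r dvd (\<Prod>x\<in>A - T. x) \<longleftrightarrow> r \<in> A - T"
    using assms T by (auto simp: prime_dvd_prod_primes_iff subset_iff)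
  then show False using r_dvd \<open>r \<in> A\<close> by (cases "r \<in> T") (auto simp: dvd_add_right_iff dvd_add_left_iff)
qed

lemma euclid_reachable_insert:
  "prime r \<Longrightarrow> euclid_divisor A r \<Longrightarrow> euclid_reachable (insert r A) q \<Longrightarrow> euclid_reachable A q"
  unfolding euclid_reachable_def by (metis euclid_extension.simps(2) list.set_intros(2))

lemma euclid_reachable_divisor: "prime q \<Longrightarrow> euclid_divisor A q \<Longrightarrow> euclid_reachable A q"
  unfolding euclid_reachable_def by (intro exI[of _ "[q]"]) simp

inductive_set generated_mod :: "nat \<Rightarrow> nat set \<Rightarrow> nat set" for q :: nat and Q :: "nat set" where
  one: "1 \<in> generated_mod q Q"
| step: "x \<in> Q \<Longrightarrow> k \<in> generated_mod q Q \<Longrightarrow> x * k mod q \<in> generated_mod q Q"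

context
  fixes q :: nat and Q :: "nat set"
  assumes prime_q: "prime q" and Q_range: "Q \<subseteq> {1..<q}"
begin

lemma generated_mod_range: "k \<in> generated_mod q Q \<Longrightarrow> k \<in> {1..<q}"
proof (induction rule: generated_mod.induct)
  case one
  then show ?case using prime_gt_1_nat[OF prime_q] by simp
next
  case (step x k)
  moreover have "x \<in> {1..<q}" using step.hyps(1) Q_range by blast
  ultimately have "\<not> q dvd x" "\<not> q dvd k" by (auto dest: dvd_imp_le)
  then have "\<not> q dvd x * k" using prime_q prime_dvd_mult_iff by blast
  then show ?case using prime_gt_1_nat[OF prime_q] by (auto simp: dvd_eq_mod_eq_0 Suc_le_eq)
qed

lemma generated_mod_mult:
  "a \<in> generated_mod q Q \<Longrightarrow> b \<in> generated_mod q Q \<Longrightarrow> a * b mod q \<in> generated_mod q Q"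
proof (induction rule: generated_mod.induct)
  case one
  then show ?case using generated_mod_range by simp
next
  case (step x k)
  have "x * k mod q * b mod q = x * (k * b mod q) mod q"
    by (simp add: mod_mult_left_eq mod_mult_right_eq mult.assoc)
  then show ?case using step generated_mod.step by simp
qed

lemma subset_generated_mod: "Q \<subseteq> generated_mod q Q"
proof
  fix x assume "x \<in> Q"
  then have "x * 1 mod q \<in> generated_mod q Q" by (intro generated_mod.intros)
  then show "x \<in> generated_mod q Q" using \<open>x \<in> Q\<close> Q_range by auto
qed

lemma unit_subgroup_generated_mod: "unit_subgroup q (generated_mod q Q)"
  unfolding unit_subgroup_def using generated_mod_range generated_mod_mult generated_mod.one by blast

end

definition subset_products_mod :: "nat \<Rightarrow> nat set \<Rightarrow> nat set" where
  "subset_products_mod q B = (\<lambda>T. (\<Prod>x\<in>T. x) mod q) ` Pow B"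

definition blocked :: "nat \<Rightarrow> nat set set" where
  "blocked q = {B. finite B \<and> (\<forall>p\<in>B. prime p) \<and> q \<notin> B \<and> \<not> euclid_reachable B q}"

lemma subset_products_mod_mono: "B \<subseteq> B' \<Longrightarrow> subset_products_mod q B \<subseteq> subset_products_mod q B'"
  unfolding subset_products_mod_def by auto

lemma subset_products_mod_range:
  assumes "prime q" and "B \<in> blocked q"
  shows "subset_products_mod q B \<subseteq> {1..<q}"
proof
  fix y assume "y \<in> subset_products_mod q B"
  then obtain T where T: "T \<subseteq> B" and y: "y = (\<Prod>x\<in>T. x) mod q"
    by (auto simp: subset_products_mod_def)
  have "finite T" "\<forall>p\<in>T. prime p" "q \<notin> T" using assms(2) T finite_subset by (auto simp: blocked_def)
  then have "\<not> q dvd (\<Prod>x\<in>T. x)" using assms(1) prime_dvd_prod_primes_iff by blast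
  then show "y \<in> {1..<q}" using y prime_gt_0_nat[OF assms(1)] by (auto simp: dvd_eq_mod_eq_0 Suc_le_eq)
qed

locale maximal_blocked =
  fixes q :: nat and A :: "nat set"
  assumes prime_q: "prime q" and A_blocked: "A \<in> blocked q"
    and A_maximal: "\<And>B. B \<in> blocked q \<Longrightarrow> card (subset_products_mod q B) \<le> card (subset_products_mod q A)"
begin

abbreviation Y :: "nat set" where "Y \<equiv> subset_products_mod q A"

definition twins :: "nat set set" where
  "twins = {B \<in> blocked q. subset_products_mod q B = Y}"

definition stabilizer :: "nat set" where
  "stabilizer = {h. h < q \<and> (\<forall>y\<in>Y. h * y mod q \<in> Y)}"

definition c0 :: nat where "c0 = (\<Prod>x\<in>A. x) mod q"

definition Q :: "nat set" where
  "Q = {x \<in> stabilizer. \<exists>B\<in>twins. (\<Prod>y\<in>B. y) mod q = c0 * x mod q}"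

abbreviation K :: "nat set" where "K \<equiv> generated_mod q Q"

definition shifted_twin :: "nat set \<Rightarrow> nat \<Rightarrow> bool" where
  "shifted_twin B x \<longleftrightarrow> B \<in> twins \<and> x \<in> K \<and> (\<Prod>y\<in>B. y) mod q = c0 * x mod q"

lemma Y_range: "Y \<subseteq> {1..<q}"
  using subset_products_mod_range[OF prime_q A_blocked] .

lemma one_mem_Y: "1 \<in> Y"
  unfolding subset_products_mod_def using prime_gt_1_nat[OF prime_q] by (auto intro!: image_eqI[of _ _ "{}"])

lemma stabilizer_subset_Y: "stabilizer \<subseteq> Y"
proof
  fix h assume "h \<in> stabilizer"
  then have "h * 1 mod q \<in> Y" "h < q" using one_mem_Y by (auto simp: stabilizer_def)
  then show "h \<in> Y" by simp
qed

lemma stabilizer_mult: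
  assumes "h \<in> stabilizer" and "h' \<in> stabilizer"
  shows "h * h' mod q \<in> stabilizer"
proof -
  have "h * h' mod q * y mod q = h * (h' * y mod q) mod q" for y
    by (simp add: mod_mult_left_eq mod_mult_right_eq mult.assoc)
  then show ?thesis using assms prime_gt_0_nat[OF prime_q] by (auto simp: stabilizer_def)
qed

lemma twin_insert:
  assumes B: "B \<in> twins" and r: "prime r" "euclid_divisor B r"
  shows "insert r B \<in> twins"
proof -
  have B_blocked: "B \<in> blocked q" and Y_B: "subset_products_mod q B = Y"
    using B by (auto simp: twins_def)
  then have "r \<noteq> q" using euclid_reachable_divisor r by (auto simp: blocked_def)
  then have blocked: "insert r B \<in> blocked q"
    using B_blocked r euclid_reachable_insert by (auto simp: blocked_def)
  have sub: "Y \<subseteq> subset_products_mod q (insert r B)"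
    using Y_B subset_products_mod_mono by blast
  have fin: "finite (subset_products_mod q (insert r B))"
    using blocked by (simp add: blocked_def subset_products_mod_def)
  have "card (subset_products_mod q (insert r B)) \<le> card Y" using A_maximal[OF blocked] .
  then have "subset_products_mod q (insert r B) = Y" using card_seteq[OF fin sub] by simp
  then show ?thesis using blocked by (simp add: twins_def)
qed

lemma twin_divisor_mem_stabilizer:
  assumes B: "B \<in> twins" and r: "prime r" "euclid_divisor B r"
  shows "r mod q \<in> stabilizer"
proof -
  have B_blocked: "B \<in> blocked q" and Y_B: "subset_products_mod q B = Y"
    using B unfolding twins_def by blast+
  have r_notin: "r \<notin> B" using euclid_divisor_not_mem r B_blocked unfolding blocked_def by blast
  have "r mod q * y mod q \<in> Y" if "y \<in> Y" for y
  proof -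
    have "y \<in> subset_products_mod q B" using that Y_B by simp
    then obtain T where T: "T \<subseteq> B" and y: "y = (\<Prod>x\<in>T. x) mod q"
      unfolding subset_products_mod_def by blast
    have "finite T" using T B_blocked finite_subset unfolding blocked_def by blast
    moreover have "r \<notin> T" using T r_notin by blast
    ultimately have "(\<Prod>x\<in>insert r T. x) = r * (\<Prod>x\<in>T. x)" by simp
    then have "r mod q * y mod q = (\<Prod>x\<in>insert r T. x) mod q" using y by (simp add: mod_mult_eq)
    moreover have "(\<Prod>x\<in>insert r T. x) mod q \<in> subset_products_mod q (insert r B)"
      using T unfolding subset_products_mod_def by blast
    moreover have "subset_products_mod q (insert r B) = Y"
      using twin_insert[OF B r] unfolding twins_def by blast
    ultimately show ?thesis by simp
  qed
  then show ?thesis using prime_gt_0_nat[OF prime_q] by (simp add: stabilizer_def)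
qed

lemma K_subset_stabilizer: "K \<subseteq> stabilizer"
proof
  fix k assume "k \<in> K"
  then show "k \<in> stabilizer"
  proof (induction rule: generated_mod.induct)
    case one
    have "y < q" if "y \<in> Y" for y using Y_range that by auto
    then show ?case using prime_gt_1_nat[OF prime_q] by (simp add: stabilizer_def)
  next
    case (step x k)
    then show ?case using stabilizer_mult unfolding Q_def by blast
  qed
qed

lemma Q_range: "Q \<subseteq> {1..<q}"
  using stabilizer_subset_Y Y_range unfolding Q_def by blast

lemma unit_subgroup_K: "unit_subgroup q K"
  using unit_subgroup_generated_mod[OF prime_q Q_range] .

lemma shifted_twin_self: "shifted_twin A 1"
  unfolding shifted_twin_def twins_def c0_def using A_blocked generated_mod.one by simp

lemma shifted_twin_divisor_mem_K:
  assumes B: "shifted_twin B x" and r: "prime r" "euclid_divisor B r"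
  shows "r mod q \<in> K"
proof -
  have twin: "B \<in> twins" and x: "x \<in> K" and B_prod: "(\<Prod>y\<in>B. y) mod q = c0 * x mod q"
    using B unfolding shifted_twin_def by blast+
  have B_blocked: "B \<in> blocked q" using twin unfolding twins_def by blast
  then have fin: "finite B" and r_notin: "r \<notin> B"
    using euclid_divisor_not_mem r unfolding blocked_def by blast+
  define z where "z = x * (r mod q) mod q"
  have "z \<in> stabilizer"
    unfolding z_def using stabilizer_mult K_subset_stabilizer x twin_divisor_mem_stabilizer[OF twin r] by blast
  moreover have "(\<Prod>y\<in>insert r B. y) mod q = c0 * z mod q"
  proof -
    have "(\<Prod>y\<in>insert r B. y) mod q = ((\<Prod>y\<in>B. y) mod q) * r mod q"
      using fin r_notin by (simp add: mod_mult_right_eq mult.commute)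
    also have "\<dots> = c0 * z mod q"
      unfolding B_prod z_def by (simp add: mod_mult_left_eq mod_mult_right_eq mult.assoc)
    finally show ?thesis .
  qed
  ultimately have "z \<in> Q" using twin_insert[OF twin r] unfolding Q_def by blast
  then have "z \<in> K" using subset_generated_mod[OF prime_q Q_range] by blast
  obtain x' where x': "x' \<in> K" "[x' * x = 1] (mod q)"
    using unit_subgroup_inverse[OF prime_q unit_subgroup_K x] .
  have "x' * z mod q \<in> K" using unit_subgroup_K x' \<open>z \<in> K\<close> by (simp add: unit_subgroup_def)
  moreover have "x' * z mod q = x' * x * r mod q"
    unfolding z_def by (simp add: mod_mult_right_eq mult.assoc)
  moreover have "\<dots> = 1 * r mod q"
    using x'(2) unfolding cong_def by (metis mod_mult_left_eq)
  ultimately show ?thesis by simp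
qed

lemma shifted_twin_euclid_number_mem_K:
  assumes B: "shifted_twin B x" and T: "T \<subseteq> B"
  shows "((\<Prod>y\<in>T. y) + (\<Prod>y\<in>B - T. y)) mod q \<in> K"
proof (rule unit_subgroup_mod_of_prime_divisors[OF prime_q unit_subgroup_K])
  have "\<forall>p\<in>B. prime p" using B unfolding shifted_twin_def twins_def blocked_def by blast
  then have "(\<Prod>y\<in>T. y) > 0" using T by (intro prod_pos) (auto simp: prime_gt_0_nat)
  then show "(\<Prod>y\<in>T. y) + (\<Prod>y\<in>B - T. y) > 0" by simp
next
  fix r assume "prime r" and "r dvd (\<Prod>y\<in>T. y) + (\<Prod>y\<in>B - T. y)"
  then show "r mod q \<in> K"
    using shifted_twin_divisor_mem_K[OF B] T unfolding euclid_divisor_def by blast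
qed

lemma shifted_twin_affine_square_mem_K:
  assumes B: "shifted_twin B x" and k: "k \<in> K"
  shows "(1 + ((\<Prod>y\<in>B. y) mod q) * k\<^sup>2) mod q \<in> K"
proof -
  \<comment> \<open>As \<open>k\<^sup>-\<^sup>1 \<in> K \<subseteq> Y\<close>, some \<open>T \<subseteq> B\<close> has \<open>\<Prod>T \<equiv> k\<^sup>-\<^sup>1\<close>, and then
     \<open>(\<Prod>T + \<Prod>(B - T)) k \<equiv> 1 + (\<Prod>B) k\<^sup>2\<close>.\<close>
  have fin: "finite B" and Y_B: "subset_products_mod q B = Y"
    using B unfolding shifted_twin_def twins_def blocked_def by blast+
  obtain d where d: "d \<in> K" "[d * k = 1] (mod q)"
    using unit_subgroup_inverse[OF prime_q unit_subgroup_K k] .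
  then have "d \<in> subset_products_mod q B"
    using K_subset_stabilizer stabilizer_subset_Y Y_B by blast
  then obtain T where T: "T \<subseteq> B" and d_eq: "d = (\<Prod>y\<in>T. y) mod q"
    unfolding subset_products_mod_def by blast
  define a where "a = (\<Prod>y\<in>T. y)"
  define b where "b = (\<Prod>y\<in>B - T. y)"
  have prod_B: "(\<Prod>y\<in>B. y) = a * b"
    unfolding a_def b_def using prod.subset_diff[OF T fin] by (simp add: mult.commute)
  have ak: "[a * k = 1] (mod q)"
    using d(2) d_eq unfolding a_def cong_def by (metis mod_mult_left_eq)
  have "[(a + b) * k = 1 + (a * k) * (b * k)] (mod q)"
  proof -
    have "[a * k + 1 * (b * k) = 1 + (a * k) * (b * k)] (mod q)"
      using ak by (intro cong_add cong_mult cong_refl) (auto simp: cong_sym)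
    then show ?thesis by (simp add: algebra_simps)
  qed
  moreover have "(a * k) * (b * k) = (\<Prod>y\<in>B. y) * k\<^sup>2"
    using prod_B by (simp add: power2_eq_square algebra_simps)
  ultimately have "((a + b) mod q) * k mod q = (1 + ((\<Prod>y\<in>B. y) mod q) * k\<^sup>2) mod q"
    unfolding cong_def by (metis mod_add_right_eq mod_mult_left_eq)
  moreover have "((a + b) mod q) * k mod q \<in> K"
    using shifted_twin_euclid_number_mem_K[OF B T] unit_subgroup_K k
    unfolding a_def b_def unit_subgroup_def by blast
  ultimately show ?thesis by simp
qed

lemma shifted_twin_dvd:
  assumes B: "shifted_twin B x"
  shows "even (card K) \<and>
    q dvd ((\<Prod>y\<in>B. y) mod q) ^ (card K div 2) + (card K choose (card K div 2))"
proof (rule unit_subgroup_affine_squares[OF prime_q unit_subgroup_K])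
  have "subset_products_mod q B = Y" using B unfolding shifted_twin_def twins_def by blast
  then have "(\<Prod>y\<in>B. y) mod q \<in> Y" unfolding subset_products_mod_def by blast
  then have "(\<Prod>y\<in>B. y) mod q \<in> {1..<q}" using Y_range by blast
  then show "\<not> q dvd (\<Prod>y\<in>B. y) mod q" by (auto dest: dvd_imp_le)
  show "\<forall>k\<in>K. (1 + (\<Prod>y\<in>B. y) mod q * k\<^sup>2) mod q \<in> K"
    using shifted_twin_affine_square_mem_K[OF B] by blast
qed

lemma Q_pow_half_card:
  assumes x: "x \<in> Q"
  shows "[x ^ (card K div 2) = 1] (mod q)"
proof -
  \<comment> \<open>Compare \<open>shifted_twin_dvd\<close> for a twin with product \<open>c0 x\<close> and for \<open>A\<close> itself.\<close>
  define m where "m = card K div 2"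
  define b where "b = card K choose m"
  obtain B where "B \<in> twins" and B_prod: "(\<Prod>y\<in>B. y) mod q = c0 * x mod q"
    using x unfolding Q_def by blast
  moreover have "x \<in> K" using x subset_generated_mod[OF prime_q Q_range] by blast
  ultimately have "shifted_twin B x" unfolding shifted_twin_def by blast
  then have "[(c0 * x mod q) ^ m + b = 0] (mod q)"
    using shifted_twin_dvd[of B x] B_prod unfolding m_def b_def by (simp add: cong_0_iff)
  moreover have "[c0 ^ m + b = 0] (mod q)"
    using shifted_twin_dvd[OF shifted_twin_self] unfolding m_def b_def c0_def by (simp add: cong_0_iff)
  ultimately have "[(c0 * x mod q) ^ m + b = c0 ^ m + b] (mod q)" by (metis cong_sym cong_trans)
  then have "[x ^ m * c0 ^ m = 1 * c0 ^ m] (mod q)"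
    unfolding cong_add_rcancel_nat by (simp add: cong_def power_mod power_mult_distrib mult.commute)
  moreover have "c0 \<in> {1..<q}"
    using A_blocked Y_range unfolding c0_def subset_products_mod_def by blast
  then have "coprime c0 q" using prime_q by (intro prime_coprime_of_not_dvd) (auto dest: dvd_imp_le)
  then have "coprime (c0 ^ m) q" by simp
  ultimately show ?thesis unfolding m_def using cong_mult_rcancel_nat by blast
qed

theorem maximal_blocked_absurd: False
proof -
  define m where "m = card K div 2"
  have "even (card K)" using shifted_twin_dvd[OF shifted_twin_self] by blast
  then have m: "0 < m" "m < card K"
    using unit_subgroup_card_pos[OF prime_q unit_subgroup_K] unfolding m_def by auto
  have "[k ^ m = 1] (mod q)" if "k \<in> K" for k
    using that
  proof (induction rule: generated_mod.induct)
    case one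
    then show ?case by simp
  next
    case (step x k)
    have "[(x * k mod q) ^ m = x ^ m * k ^ m] (mod q)"
      by (simp add: cong_def power_mod power_mult_distrib)
    also have "[x ^ m * k ^ m = 1 * 1] (mod q)"
      using Q_pow_half_card[OF step(1)] step.IH unfolding m_def by (rule cong_mult)
    finally show ?case by simp
  qed
  then have "card K \<le> m" using unit_subgroup_card_le_exponent[OF prime_q unit_subgroup_K \<open>0 < m\<close>] by blast
  then show False using m by simp
qed

end

lemma euclid_reachable_prime:
  assumes "prime q" and "finite A" and "\<forall>p\<in>A. prime p" and "q \<notin> A"
  shows "euclid_reachable A q"
proof (rule ccontr)
  assume "\<not> euclid_reachable A q"
  then have "A \<in> blocked q" using assms unfolding blocked_def by blast
  moreover have "card (subset_products_mod q B) < q + 1" for B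
  proof -
    have "subset_products_mod q B \<subseteq> {..<q}"
      using prime_gt_0_nat[OF assms(1)] by (auto simp: subset_products_mod_def)
    then show ?thesis using card_mono[of "{..<q}"] by (simp add: less_Suc_eq_le)
  qed
  ultimately obtain A' where "A' \<in> blocked q"
    and "\<forall>B. B \<in> blocked q \<longrightarrow> card (subset_products_mod q B) \<le> card (subset_products_mod q A')"
    using Lattices_Big.ex_has_greatest_nat[of "\<lambda>B. B \<in> blocked q" A "\<lambda>B. card (subset_products_mod q B)" "q + 1"]
    by blast
  then interpret maximal_blocked q A' using assms(1) by unfold_locales blast+
  show False by (rule maximal_blocked_absurd)
qed

lemma euclid_extension_through_prime:
  assumes "finite A" and "\<forall>p\<in>A. prime p" and "prime q"
  obtains xs where "xs \<noteq> []" and "euclid_extension A xs" and "q \<in> A \<union> set xs"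
proof -
  have "infinite ({p. prime p} - A)" by (rule Diff_infinite_finite[OF assms(1) primes_infinite])
  then obtain q' where "q' \<in> {p. prime p} - A" using infinite_imp_nonempty by blast
  then have "euclid_reachable A q'" using euclid_reachable_prime assms(1,2) by simp
  then obtain xs where xs: "euclid_extension A xs" "q' \<in> set xs"
    unfolding euclid_reachable_def by blast
  show ?thesis
  proof (cases "q \<in> A")
    case True
    moreover have "xs \<noteq> []" using xs(2) by auto
    ultimately show ?thesis using xs(1) True by (intro that) auto
  next
    case False
    then have "euclid_reachable A q" using euclid_reachable_prime assms by simp
    then obtain ys where "euclid_extension A ys" "q \<in> set ys"
      unfolding euclid_reachable_def by blast
    moreover have "ys \<noteq> []" using \<open>q \<in> set ys\<close> by auto
    ultimately show ?thesis by (intro that) auto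
  qed
qed

definition euclid_list :: "nat \<Rightarrow> nat list \<Rightarrow> bool" where
  "euclid_list k L \<longleftrightarrow> distinct L \<and> (\<forall>x\<in>set L. prime x) \<and>
     (\<forall>j. k \<le> j \<and> j < length L \<longrightarrow> euclid_divisor (set (take j L)) (L ! j))"

lemma euclid_list_append:
  "euclid_list k L \<Longrightarrow> euclid_extension (set L) xs \<Longrightarrow> euclid_list k (L @ xs)"
proof (induction xs arbitrary: L)
  case Nil
  then show ?case by simp
next
  case (Cons x xs)
  then have x: "prime x" "euclid_divisor (set L) x" and xs: "euclid_extension (set (L @ [x])) xs"
    by auto
  have "x \<notin> set L"
    using euclid_divisor_not_mem[OF _ _ x] Cons.prems(1) unfolding euclid_list_def by blast
  then have "euclid_list k (L @ [x])"
    using Cons.prems(1) x unfolding euclid_list_def by (auto simp: nth_append less_Suc_eq)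
  then show ?case using Cons.IH[OF _ xs] by simp
qed

lemma euclid_list_extend:
  assumes "euclid_list k L" and "prime q"
  obtains ys where "ys \<noteq> []" and "euclid_list k (L @ ys)" and "q \<in> set (L @ ys)"
proof -
  have "\<forall>x\<in>set L. prime x" using assms(1) unfolding euclid_list_def by blast
  then obtain ys where "ys \<noteq> []" "euclid_extension (set L) ys" "q \<in> set L \<union> set ys"
    using euclid_extension_through_prime[OF finite_set _ assms(2)] by blast
  then show ?thesis using that euclid_list_append[OF assms(1)] by simp
qed

lemma euclid_list_chain:
  assumes "euclid_list k L"
  obtains f where "f 0 = L" and "\<And>n. euclid_list k (f n)"
    and "\<And>n. \<exists>ys. ys \<noteq> [] \<and> f (Suc n) = f n @ ys"
    and "\<And>q. prime q \<Longrightarrow> q \<in> set (f (Suc q))"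
proof -
  \<comment> \<open>Step \<open>n\<close> reaches \<open>n\<close> if it is prime; otherwise reaching \<open>2\<close> only keeps the list growing.\<close>
  define target :: "nat \<Rightarrow> nat" where "target n = (if prime n then n else 2)" for n
  have "\<forall>n M. \<exists>ys. euclid_list k M \<longrightarrow>
      ys \<noteq> [] \<and> euclid_list k (M @ ys) \<and> target n \<in> set (M @ ys)"
    using euclid_list_extend unfolding target_def by (metis two_is_prime_nat)
  then obtain ext where ext: "\<And>n M. euclid_list k M \<Longrightarrow>
      ext n M \<noteq> [] \<and> euclid_list k (M @ ext n M) \<and> target n \<in> set (M @ ext n M)"
    by metis
  define f where "f = rec_nat L (\<lambda>n M. M @ ext n M)"
  have f_Suc: "f (Suc n) = f n @ ext n (f n)" for n by (simp add: f_def)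
  have f_list: "euclid_list k (f n)" for n
    by (induction n) (use assms ext in \<open>auto simp: f_def\<close>)
  show ?thesis
  proof (rule that)
    show "f 0 = L" by (simp add: f_def)
    show "\<exists>ys. ys \<noteq> [] \<and> f (Suc n) = f n @ ys" for n using ext f_list f_Suc by blast
    show "q \<in> set (f (Suc q))" if "prime q" for q
      using ext[OF f_list] f_Suc that unfolding target_def by metis
  qed (rule f_list)
qed

lemma list_chain_length:
  assumes "\<And>n. \<exists>ys. ys \<noteq> [] \<and> f (Suc n) = f n @ ys"
  shows "n \<le> length (f n)"
proof (induction n)
  case (Suc n)
  obtain ys where "ys \<noteq> []" and f_Suc: "f (Suc n) = f n @ ys" using assms by blast
  then have "length ys > 0" by simp
  then show ?case unfolding f_Suc length_append using Suc.IH by linarith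
qed simp

lemma list_chain_limit:
  fixes f :: "nat \<Rightarrow> 'a list"
  assumes grow: "\<And>n. \<exists>ys. ys \<noteq> [] \<and> f (Suc n) = f n @ ys"
  obtains p where "\<And>n i. i < length (f n) \<Longrightarrow> f n ! i = p i"
proof
  have prefix: "\<exists>ys. f (m + d) = f m @ ys" for m d
  proof (induction d)
    case (Suc d)
    then show ?case using grow[of "m + d"] by (metis add_Suc_right append.assoc)
  qed simp
  have same: "f m ! i = f n ! i" if "i < length (f m)" "m \<le> n" for m n i
    using prefix[of m "n - m"] that by (auto simp: nth_append)
  fix n i assume i: "i < length (f n)"
  have "i < length (f (Suc i))" using list_chain_length[of f "Suc i", OF grow] by simp
  then show "f n ! i = f (Suc i) ! i" using same i by (metis nat_le_linear)
qed

lemma euclid_divisor_take_nth: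
  assumes "distinct L" and "j \<le> length L" and "euclid_divisor (set (take j L)) x"
  shows "\<exists>I\<subseteq>{..<j}. x dvd (\<Prod>i\<in>I. L ! i) + (\<Prod>i\<in>{..<j} - I. L ! i)"
proof -
  obtain T where T: "T \<subseteq> set (take j L)"
    and x_dvd: "x dvd (\<Prod>y\<in>T. y) + (\<Prod>y\<in>set (take j L) - T. y)"
    using assms(3) unfolding euclid_divisor_def by blast
  define I where "I = {i\<in>{..<j}. L ! i \<in> T}"
  have inj: "inj_on ((!) L) {..<j}" using inj_on_nth[OF assms(1)] assms(2) by simp
  have image: "(!) L ` {..<j} = set (take j L)" using nth_image[OF assms(2)] by (simp add: atLeast0LessThan)
  then have "(!) L ` I = T" and "(!) L ` ({..<j} - I) = set (take j L) - T"
    using T inj_on_image_set_diff[OF inj] unfolding I_def by auto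
  moreover have reindex: "(\<Prod>i\<in>J. L ! i) = (\<Prod>y\<in>(!) L ` J. y)" if "J \<subseteq> {..<j}" for J
    using prod.reindex[OF inj_on_subset[OF inj that], of "\<lambda>y. y"] by simp
  moreover have "I \<subseteq> {..<j}" by (auto simp: I_def)
  ultimately have "(\<Prod>i\<in>I. L ! i) = (\<Prod>y\<in>T. y)"
    and "(\<Prod>i\<in>{..<j} - I. L ! i) = (\<Prod>y\<in>set (take j L) - T. y)"
    using reindex[OF Diff_subset] by simp_all
  then show ?thesis using x_dvd \<open>I \<subseteq> {..<j}\<close> by (intro exI[of _ I]) simp
qed

lemma gen_euclid_seq_of_list_chain:
  assumes "f 0 = L" and "distinct L" and "set L = P"
    and lists: "\<And>n. euclid_list (card P) (f n)"
    and grow: "\<And>n. \<exists>ys. ys \<noteq> [] \<and> f (Suc n) = f n @ ys"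
    and agree: "\<And>n i. i < length (f n) \<Longrightarrow> f n ! i = p i"
  shows "gen_euclid_seq P p"
  unfolding gen_euclid_seq_def
proof (intro conjI allI impI)
  have long: "i < length (f (Suc i))" for i using list_chain_length[of f "Suc i", OF grow] by simp
  then have p_eq: "p i = f (Suc i) ! i" for i using agree by metis
  show "prime (p i)" for i using lists[of "Suc i"] long[of i] unfolding p_eq euclid_list_def by auto
  have length_L: "length L = card P" using distinct_card[OF assms(2)] assms(3) by simp
  have "p i = L ! i" if "i \<in> {..<card P}" for i
    using agree[where n = 0] that assms(1) length_L by simp
  then show "bij_betw p {..<card P} P"
    using bij_betw_nth[OF assms(2) _ assms(3)[symmetric]] length_L bij_betw_cong by metis
  fix j assume "card P \<le> j"
  then have "euclid_divisor (set (take j (f (Suc j)))) (p j)"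
    using lists[of "Suc j"] long[of j] unfolding p_eq euclid_list_def by blast
  then obtain I where "I \<subseteq> {..<j}"
    and "p j dvd (\<Prod>i\<in>I. f (Suc j) ! i) + (\<Prod>i\<in>{..<j} - I. f (Suc j) ! i)"
    using euclid_divisor_take_nth lists[of "Suc j"] long[of j] unfolding euclid_list_def
    by (metis less_imp_le_nat)
  moreover have "(\<Prod>i\<in>J. f (Suc j) ! i) = (\<Prod>i\<in>J. p i)" if "J \<subseteq> {..<j}" for J
    using agree long[of j] that by (intro prod.cong) auto
  ultimately show "\<exists>I\<subseteq>{..<j}. p j dvd (\<Prod>i\<in>I. p i) + (\<Prod>i\<in>{..<j} - I. p i)"
    by (metis Diff_subset)
qed

theorem theorem1:
  fixes P :: "nat set"
  assumes "finite P" and "\<forall>q\<in>P. prime q"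
  shows "\<exists>p. gen_euclid_seq P p \<and> (\<forall>q. prime q \<longrightarrow> (\<exists>i. p i = q))"
proof -
  define L where "L = sorted_list_of_set P"
  have L: "distinct L" "set L = P" using assms(1) by (auto simp: L_def)
  then have "euclid_list (card P) L"
    using assms(2) distinct_card by (fastforce simp: euclid_list_def)
  then obtain f where "f 0 = L" and lists: "\<And>n. euclid_list (card P) (f n)"
    and grow: "\<And>n. \<exists>ys. ys \<noteq> [] \<and> f (Suc n) = f n @ ys"
    and primes: "\<And>q. prime q \<Longrightarrow> q \<in> set (f (Suc q))"
    using euclid_list_chain by blast
  obtain p where agree: "\<And>n i. i < length (f n) \<Longrightarrow> f n ! i = p i"
    using list_chain_limit[of f] grow by blast
  have "gen_euclid_seq P p"
    using gen_euclid_seq_of_list_chain[OF \<open>f 0 = L\<close> L lists grow agree] .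
  moreover have "\<exists>i. p i = q" if "prime q" for q
    using primes[OF that] agree by (metis in_set_conv_nth)
  ultimately show ?thesis by blast
qed

end
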